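(* Let $f(z)=z+\sum_{n=2}^{\infty}a_nz^n$ belong to the class $\mathcal{S}_u^*$, and let $f^{-1}(w)=w+A_2w^2+A_3w^3+A_4w^4+\cdots$ be the inverse function of $f$ near $w=0$. Then $$|A_2A_4-A_3^2|\le\frac5{12},$$ and the estimate is sharp, i.e. there exists a function $f\in\mathcal{S}_u^*$ for which equality holds.
   Context: $\mathbb{D}=\{z\in\mathbb{C}:|z|<1\}$. The class $\mathcal{S}_u^*$ consists of all analytic functions $f$ on $\mathbb{D}$ with $f(0)=0$, $f'(0)=1$ satisfying $\left|\frac{zf'(z)}{f(z)}-1\right|<1$ for all $z\in\mathbb{D}$; such functions are univalent, so $f^{-1}$ exists at least on $\{|w|<1/4\}$. One has $A_2=-a_2$, $A_3=-a_3+2a_2^2$, $A_4=-a_4+5a_2a_3-5a_2^3$, so $A_2A_4-A_3^2=a_2a_4-a_2^2a_3+a_2^4-a_3^2$ (denoted $H_{2,2}(f^{-1})$). *)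

theory Defs
  imports "HOL-Analysis.Analysis"
begin

text \<open>At z = 0 the quotient is understood as its
  removable value 1, so the condition is imposed for z \<noteq> 0.\<close>
definition Su_star :: "(complex \<Rightarrow> complex) \<Rightarrow> bool" where
  "Su_star f \<longleftrightarrow> f holomorphic_on ball 0 1 \<and> f 0 = 0 \<and> deriv f 0 = 1 \<and>
     (\<forall>z\<in>ball 0 1. z \<noteq> 0 \<longrightarrow> cmod (z * deriv f z / f z - 1) < 1)"

definition tcoeff :: "(complex \<Rightarrow> complex) \<Rightarrow> nat \<Rightarrow> complex" where
  "tcoeff g n = (deriv ^^ n) g 0 / of_nat (fact n)"

definition local_inverse :: "(complex \<Rightarrow> complex) \<Rightarrow> (complex \<Rightarrow> complex) \<Rightarrow> real \<Rightarrow> bool" where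
  "local_inverse f g r \<longleftrightarrow> r > 0 \<and> g holomorphic_on ball 0 r \<and> g 0 = 0 \<and>
     g ` ball 0 r \<subseteq> ball 0 1 \<and> (\<forall>w\<in>ball 0 r. f (g w) = w)"

end

theory Submission
  imports Defs "HOL-Complex_Analysis.Complex_Analysis"
begin

text \<open>Write f z = z q z and \<phi> = q'/q. The defining condition says that z \<phi> z maps the
  disc into itself, so |\<phi>| \<le> 1 by Schwarz's lemma. With \<phi> z = c0 + c1 z + c2 z^2 + ...
  one gets a2 = c0, a3 = (c1 + c0^2)/2, a4 = (2 c2 + 3 c0 c1 + c0^3)/6, and the inverse
  coefficients turn the Hankel determinant into c0 c2/3 + 5 c0^4/12 - c0^2 c1/2 - c1^2/4.
  The Schwarz-Pick type bounds |c1|, |c2| \<le> 1 - |c0|^2 bound its modulus by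
  5/12 - (1 - x)^3 (1 + x)/6 with x = |c0|; equality at \<phi> = 1, i.e. f z = z exp z.\<close>

lemma higher_deriv_times_ident_at_0:
  fixes h :: "complex \<Rightarrow> complex"
  assumes "h holomorphic_on S" "open S" "0 \<in> S"
  shows "(deriv^^Suc n) (\<lambda>w. w * h w) 0 = of_nat (Suc n) * (deriv^^n) h 0"
proof -
  have "(deriv^^Suc n) (\<lambda>w. w * h w) 0 =
     (\<Sum>i = 0..Suc n. of_nat (Suc n choose i) * (deriv^^i) (\<lambda>w. w) 0 * (deriv^^(Suc n - i)) h 0)"
    by (rule higher_deriv_mult[OF _ assms]) (auto intro: holomorphic_intros)
  also have "\<dots> = (\<Sum>i = 0..Suc n. if i = 1 then of_nat (Suc n) * (deriv^^n) h 0 else 0)"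
    by (rule sum.cong) auto
  also have "\<dots> = of_nat (Suc n) * (deriv^^n) h 0"
    by (subst sum.delta) auto
  finally show ?thesis .
qed

lemma higher_deriv_constant_on:
  fixes p :: "complex \<Rightarrow> complex"
  assumes "p constant_on S" "open S" "z \<in> S" "n > 0"
  shows "(deriv^^n) p z = 0"
proof -
  obtain c where c: "\<And>w. w \<in> S \<Longrightarrow> p w = c"
    using assms(1) unfolding constant_on_def by blast
  then have "p holomorphic_on S"
    by (metis holomorphic_on_const holomorphic_transform)
  then have "(deriv^^n) p z = (deriv^^n) (\<lambda>_. c) z"
    by (rule higher_deriv_transform_within_open) (use assms c in auto)
  with assms(4) show ?thesis by simp
qed

lemma disc_self_map_strict_or_constant:
  fixes p :: "complex \<Rightarrow> complex"
  assumes "p holomorphic_on ball 0 1" "\<And>z. z \<in> ball 0 1 \<Longrightarrow> cmod (p z) \<le> 1"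
  shows "(\<forall>z\<in>ball 0 1. cmod (p z) < 1) \<or> p constant_on ball 0 1"
proof (cases "\<exists>\<xi>\<in>ball 0 1. cmod (p \<xi>) = 1")
  case True
  then obtain \<xi> where "\<xi> \<in> ball 0 1" "cmod (p \<xi>) = 1" by blast
  with assms have "p constant_on ball 0 1"
    by (intro maximum_modulus_principle[of p "ball 0 1" "ball 0 1" \<xi>]) auto
  then show ?thesis ..
next
  case False
  with assms(2) show ?thesis
    by (meson order.not_eq_order_implies_strict)
qed

text \<open>Composing p with the disc automorphism sending p 0 to 0 and dividing by z
  (Schwarz's lemma) gives m; solving the Moebius relation for p gives the identity.\<close>

lemma disc_self_map_Moebius_factor:
  fixes p :: "complex \<Rightarrow> complex"
  assumes holp: "p holomorphic_on ball 0 1" and lt: "\<And>z. z \<in> ball 0 1 \<Longrightarrow> cmod (p z) < 1"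
  obtains m where "m holomorphic_on ball 0 1" "\<And>z. z \<in> ball 0 1 \<Longrightarrow> cmod (m z) \<le> 1"
    "\<And>z. z \<in> ball 0 1 \<Longrightarrow> p z = p 0 + z * m z * (1 - cnj (p 0) * p z)"
proof -
  define c where "c = p 0"
  have c1: "cmod c < 1" using lt[of 0] by (simp add: c_def)
  have den: "1 - cnj c * p z \<noteq> 0" if "z \<in> ball 0 1" for z
  proof -
    have "cmod (cnj c * p z) < 1"
      using c1 lt[OF that] mult_strict_mono'[of "cmod c" 1 "cmod (p z)" 1] by (simp add: norm_mult)
    then show ?thesis by auto
  qed
  define M where "M z = Moebius_function 0 c (p z)" for z
  have holM: "M holomorphic_on ball 0 1"
    unfolding M_def[abs_def] using lt
    by (intro holomorphic_on_compose_gen[OF holp Moebius_function_holomorphic[OF c1], unfolded o_def]) auto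
  have M0: "M 0 = 0" by (simp add: M_def c_def Moebius_function_eq_zero)
  have Mlt: "cmod (M z) < 1" if "cmod z < 1" for z
    using Moebius_function_norm_lt_1[OF c1 lt] that by (simp add: M_def)
  obtain m where holm: "m holomorphic_on ball 0 1" and Mm: "\<And>z. cmod z < 1 \<Longrightarrow> M z = z * m z"
    and dM: "deriv M 0 = m 0"
    using Schwarz3[OF holM M0] by blast
  show ?thesis
  proof (rule that[OF holm])
    show "cmod (m z) \<le> 1" if "z \<in> ball 0 1" for z
    proof (cases "z = 0")
      case True then show ?thesis using Schwarz_Lemma(2)[OF holM M0 Mlt, of 0] dM by simp
    next
      case False
      then show ?thesis using Schwarz_Lemma(1)[OF holM M0 Mlt, of z] Mm[of z] that
        by (simp add: norm_mult)
    qed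
    show "p z = p 0 + z * m z * (1 - cnj (p 0) * p z)" if "z \<in> ball 0 1" for z
      using Mm[of z] den[OF that] that
      by (simp add: c_def[symmetric] M_def Moebius_function_simple field_simps)
  qed
qed

lemma Moebius_factor_derivs_at_0:
  fixes p m :: "complex \<Rightarrow> complex"
  assumes holp: "p holomorphic_on ball 0 1" and holm: "m holomorphic_on ball 0 1"
    and pm: "\<And>z. z \<in> ball 0 1 \<Longrightarrow> p z = p 0 + z * m z * (1 - cnj (p 0) * p z)"
  shows "deriv p 0 = m 0 * (1 - of_real (cmod (p 0))^2)"
    "(deriv^^2) p 0 = 2 * (1 - of_real (cmod (p 0))^2) * (deriv m 0 - cnj (p 0) * m 0 ^ 2)"
proof -
  define c where "c = p 0"
  define N where "N z = m z * (1 - cnj c * p z)" for z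
  have holN: "N holomorphic_on ball 0 1" unfolding N_def[abs_def] by (auto intro!: holomorphic_intros holm holp)
  have pN: "p z = c + z * N z" if "z \<in> ball 0 1" for z
    unfolding N_def c_def mult.assoc[symmetric] by (rule pm[OF that])
  have hd: "(deriv^^Suc n) p 0 = of_nat (Suc n) * (deriv^^n) N 0" for n
  proof -
    have "(deriv^^Suc n) p 0 = (deriv^^Suc n) (\<lambda>z. c + z * N z) 0"
      by (rule higher_deriv_transform_within_open[OF holp _ open_ball]) (auto intro!: holomorphic_intros holN pN)
    also have "\<dots> = (deriv^^Suc n) (\<lambda>z. z * N z) 0"
      by (subst higher_deriv_add[of _ "ball 0 1"]) (auto intro!: holomorphic_intros holN)
    finally show ?thesis using higher_deriv_times_ident_at_0[OF holN] by simp
  qed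
  have ccnj: "cnj c * c = of_real (cmod c)^2"
    using complex_norm_square[of c] by (simp add: mult.commute)
  show d1: "deriv p 0 = m 0 * (1 - of_real (cmod (p 0))^2)"
    using hd[of 0] by (simp add: N_def c_def[symmetric] ccnj)
  have "(N has_field_derivative deriv m 0 * (1 - cnj c * p 0) + m 0 * (- cnj c * deriv p 0)) (at 0)"
    unfolding N_def[abs_def]
    by (auto intro!: derivative_eq_intros holomorphic_derivI[OF holm] holomorphic_derivI[OF holp])
  then have "(deriv^^2) p 0 = 2 * (deriv m 0 * (1 - cnj c * c) + m 0 * (- cnj c * deriv p 0))"
    using hd[of 1] by (simp add: DERIV_imp_deriv c_def numeral_2_eq_2)
  also have "\<dots> = 2 * (1 - of_real (cmod c)^2) * (deriv m 0 - cnj c * m 0 ^ 2)"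
    unfolding ccnj d1 c_def[symmetric] by (simp add: algebra_simps power2_eq_square)
  finally show "(deriv^^2) p 0 = 2 * (1 - of_real (cmod (p 0))^2) * (deriv m 0 - cnj (p 0) * m 0 ^ 2)"
    by (simp add: c_def)
qed

lemma norm_one_minus_of_real_square:
  assumes "0 \<le> x" "x \<le> 1"
  shows "cmod (1 - (complex_of_real x)^2) = 1 - x^2"
  using assms by (metis abs_of_nonneg diff_ge_0_iff_ge norm_of_real of_real_1 of_real_diff
      of_real_power power_le_one)

lemma disc_self_map_deriv_bound:
  fixes p :: "complex \<Rightarrow> complex"
  assumes holp: "p holomorphic_on ball 0 1" and le: "\<And>z. z \<in> ball 0 1 \<Longrightarrow> cmod (p z) \<le> 1"
  shows "cmod (deriv p 0) \<le> 1 - (cmod (p 0))^2"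
proof -
  have c: "cmod (p 0) \<le> 1" using le[of 0] by simp
  then have nonneg: "0 \<le> 1 - (cmod (p 0))^2" by (simp add: power_le_one)
  from disc_self_map_strict_or_constant[OF assms] show ?thesis
  proof
    assume "\<forall>z\<in>ball 0 1. cmod (p z) < 1"
    then obtain m where holm: "m holomorphic_on ball 0 1"
      and mle: "\<And>z. z \<in> ball 0 1 \<Longrightarrow> cmod (m z) \<le> 1"
      and pm: "\<And>z. z \<in> ball 0 1 \<Longrightarrow> p z = p 0 + z * m z * (1 - cnj (p 0) * p z)"
      using disc_self_map_Moebius_factor[OF holp] by blast
    note m = mle Moebius_factor_derivs_at_0(1)[OF holp holm pm]
    have "cmod (deriv p 0) = cmod (m 0) * (1 - (cmod (p 0))^2)"
      using m(2) norm_one_minus_of_real_square[OF norm_ge_zero c] by (simp add: norm_mult)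
    also have "\<dots> \<le> 1 - (cmod (p 0))^2"
      using m(1)[of 0] nonneg mult_right_mono[of "cmod (m 0)" 1] by simp
    finally show ?thesis .
  next
    assume "p constant_on ball 0 1"
    then show ?thesis using higher_deriv_constant_on[OF _ open_ball, where z=0 and n=1] nonneg by simp
  qed
qed

lemma disc_self_map_second_deriv_bound:
  fixes p :: "complex \<Rightarrow> complex"
  assumes holp: "p holomorphic_on ball 0 1" and le: "\<And>z. z \<in> ball 0 1 \<Longrightarrow> cmod (p z) \<le> 1"
  shows "cmod ((deriv^^2) p 0) \<le> 2 * (1 - (cmod (p 0))^2)"
proof -
  have c: "cmod (p 0) \<le> 1" using le[of 0] by simp
  then have nonneg: "0 \<le> 1 - (cmod (p 0))^2" by (simp add: power_le_one)
  from disc_self_map_strict_or_constant[OF assms] show ?thesis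
  proof
    assume "\<forall>z\<in>ball 0 1. cmod (p z) < 1"
    then obtain m where holm: "m holomorphic_on ball 0 1"
      and mle: "\<And>z. z \<in> ball 0 1 \<Longrightarrow> cmod (m z) \<le> 1"
      and pm: "\<And>z. z \<in> ball 0 1 \<Longrightarrow> p z = p 0 + z * m z * (1 - cnj (p 0) * p z)"
      using disc_self_map_Moebius_factor[OF holp] by blast
    note d2 = Moebius_factor_derivs_at_0(2)[OF holp holm pm]
    have "cmod (deriv m 0 - cnj (p 0) * m 0 ^ 2) \<le> cmod (deriv m 0) + cmod (p 0) * (cmod (m 0))^2"
      using norm_triangle_ineq4[of "deriv m 0" "cnj (p 0) * m 0 ^ 2"] by (simp add: norm_mult norm_power)
    also have "\<dots> \<le> (1 - (cmod (m 0))^2) + 1 * (cmod (m 0))^2"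
      using disc_self_map_deriv_bound[OF holm mle] c by (intro add_mono mult_right_mono) auto
    finally have "cmod (deriv m 0 - cnj (p 0) * m 0 ^ 2) \<le> 1" by simp
    moreover have "cmod ((deriv^^2) p 0) = 2 * (1 - (cmod (p 0))^2) * cmod (deriv m 0 - cnj (p 0) * m 0 ^ 2)"
      by (simp only: d2 norm_mult norm_one_minus_of_real_square[OF norm_ge_zero c]) simp
    ultimately show ?thesis
      using nonneg mult_left_mono[of _ 1 "2 * (1 - (cmod (p 0))^2)"] by simp
  next
    assume "p constant_on ball 0 1"
    then show ?thesis using higher_deriv_constant_on[OF _ open_ball, where z=0 and n=2] nonneg by simp
  qed
qed

lemma norm_le_1_if_times_ident_in_disc:
  fixes \<phi> :: "complex \<Rightarrow> complex"
  assumes hol: "\<phi> holomorphic_on ball 0 1"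
    and lt: "\<And>z. z \<in> ball 0 1 \<Longrightarrow> z \<noteq> 0 \<Longrightarrow> cmod (z * \<phi> z) < 1"
    and z: "z \<in> ball 0 1"
  shows "cmod (\<phi> z) \<le> 1"
proof -
  define h where "h z = z * \<phi> z" for z
  have holh: "h holomorphic_on ball 0 1" unfolding h_def[abs_def] by (intro holomorphic_intros hol)
  have h0: "h 0 = 0" by (simp add: h_def)
  have hlt: "cmod (h z) < 1" if "cmod z < 1" for z
    using lt[of z] that by (cases "z = 0") (auto simp: h_def)
  show ?thesis
  proof (cases "z = 0")
    case True
    have "(h has_field_derivative 1 * \<phi> 0 + 0 * deriv \<phi> 0) (at 0)"
      unfolding h_def[abs_def] by (auto intro!: derivative_eq_intros holomorphic_derivI[OF hol])
    then have "deriv h 0 = \<phi> 0" by (simp add: DERIV_imp_deriv)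
    then show ?thesis using Schwarz_Lemma(2)[OF holh h0 hlt, of 0] True by simp
  next
    case False
    have "cmod (h z) \<le> cmod z" using Schwarz_Lemma(1)[OF holh h0 hlt, of z] z by simp
    then show ?thesis using False by (simp add: h_def norm_mult)
  qed
qed

lemma higher_derivs_from_log_deriv:
  fixes q \<phi> :: "complex \<Rightarrow> complex"
  assumes holq: "q holomorphic_on S" and hol\<phi>: "\<phi> holomorphic_on S" and S: "open S" "0 \<in> S"
    and dq: "\<And>z. z \<in> S \<Longrightarrow> deriv q z = \<phi> z * q z"
  shows "deriv q 0 = \<phi> 0 * q 0"
    "(deriv^^2) q 0 = (deriv \<phi> 0 + \<phi> 0 ^ 2) * q 0"
    "(deriv^^3) q 0 = ((deriv^^2) \<phi> 0 + 3 * \<phi> 0 * deriv \<phi> 0 + \<phi> 0 ^ 3) * q 0"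
proof -
  have Q: "(deriv^^Suc k) q 0 = (\<Sum>i = 0..k. of_nat (k choose i) * (deriv^^i) \<phi> 0 * (deriv^^(k - i)) q 0)" for k
  proof -
    have "(deriv^^Suc k) q 0 = (deriv^^k) (deriv q) 0" by (simp add: funpow_Suc_right del: funpow.simps)
    also have "\<dots> = (deriv^^k) (\<lambda>z. \<phi> z * q z) 0"
      by (rule higher_deriv_transform_within_open[OF _ _ S])
        (auto intro!: holomorphic_intros holomorphic_deriv holq hol\<phi> dq S)
    also have "\<dots> = (\<Sum>i = 0..k. of_nat (k choose i) * (deriv^^i) \<phi> 0 * (deriv^^(k - i)) q 0)"
      by (rule higher_deriv_mult[OF hol\<phi> holq S])
    finally show ?thesis .
  qed
  show Q1: "deriv q 0 = \<phi> 0 * q 0" using Q[of 0] by simp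
  show Q2: "(deriv^^2) q 0 = (deriv \<phi> 0 + \<phi> 0 ^ 2) * q 0"
    using Q[of 1] Q1 by (simp add: numeral_2_eq_2 algebra_simps power2_eq_square)
  show "(deriv^^3) q 0 = ((deriv^^2) \<phi> 0 + 3 * \<phi> 0 * deriv \<phi> 0 + \<phi> 0 ^ 3) * q 0"
    using Q[of 2] Q1 Q2 by (simp add: eval_nat_numeral algebra_simps power2_eq_square power3_eq_cube)
qed

lemma Su_star_factor:
  assumes "Su_star f"
  obtains q where "q holomorphic_on ball 0 1" "q 0 = 1" "f = (\<lambda>z. z * q z)"
    "\<And>z. z \<in> ball 0 1 \<Longrightarrow> q z \<noteq> 0"
    "\<And>z. z \<in> ball 0 1 \<Longrightarrow> z \<noteq> 0 \<Longrightarrow> cmod (z * (deriv q z / q z)) < 1"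
proof -
  from assms have holf: "f holomorphic_on ball 0 1" and f0: "f 0 = 0" and df0: "deriv f 0 = 1"
    and cond: "\<And>z. z \<in> ball 0 1 \<Longrightarrow> z \<noteq> 0 \<Longrightarrow> cmod (z * deriv f z / f z - 1) < 1"
    unfolding Su_star_def by auto
  define q where "q = (\<lambda>z. if z = 0 then deriv f 0 else (f z - f 0) / (z - 0))"
  have holq: "q holomorphic_on ball 0 1" unfolding q_def by (rule pole_lemma[OF holf]) simp
  have q0: "q 0 = 1" by (simp add: q_def df0)
  have fq: "f = (\<lambda>z. z * q z)" by (rule ext) (simp add: q_def f0)
  have qnz: "q z \<noteq> 0" if "z \<in> ball 0 1" for z
    using cond[OF that] q0 by (cases "z = 0") (auto simp: q_def f0)
  show ?thesis
  proof (rule that[OF holq q0 fq qnz])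
    fix z :: complex assume z: "z \<in> ball 0 1" "z \<noteq> 0"
    have "((\<lambda>z. z * q z) has_field_derivative 1 * q z + z * deriv q z) (at z)"
      by (auto intro!: derivative_eq_intros holomorphic_derivI[OF holq] z)
    then have "deriv f z = q z + z * deriv q z" unfolding fq using DERIV_imp_deriv by fastforce
    then have "z * deriv f z / f z - 1 = z * (deriv q z / q z)"
      using z qnz[OF z(1)] by (simp add: fq field_simps)
    then show "cmod (z * (deriv q z / q z)) < 1" using cond[OF z] by simp
  qed
qed

lemma Su_star_higher_derivs:
  assumes "Su_star f"
  obtains \<phi> where "\<phi> holomorphic_on ball 0 1" "\<And>z. z \<in> ball 0 1 \<Longrightarrow> cmod (\<phi> z) \<le> 1"
    "(deriv^^2) f 0 = 2 * \<phi> 0"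
    "(deriv^^3) f 0 = 3 * (deriv \<phi> 0 + \<phi> 0 ^ 2)"
    "(deriv^^4) f 0 = 4 * ((deriv^^2) \<phi> 0 + 3 * \<phi> 0 * deriv \<phi> 0 + \<phi> 0 ^ 3)"
proof -
  obtain q where holq: "q holomorphic_on ball 0 1" and q0: "q 0 = 1" and fq: "f = (\<lambda>z. z * q z)"
    and qnz: "\<And>z. z \<in> ball 0 1 \<Longrightarrow> q z \<noteq> 0"
    and lt: "\<And>z. z \<in> ball 0 1 \<Longrightarrow> z \<noteq> 0 \<Longrightarrow> cmod (z * (deriv q z / q z)) < 1"
    using Su_star_factor[OF assms] by blast
  define \<phi> where "\<phi> z = deriv q z / q z" for z
  have hol\<phi>: "\<phi> holomorphic_on ball 0 1"
    unfolding \<phi>_def[abs_def] using qnz by (auto intro!: holomorphic_intros holomorphic_deriv holq)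
  have le1: "cmod (\<phi> z) \<le> 1" if "z \<in> ball 0 1" for z
    using norm_le_1_if_times_ident_in_disc[OF hol\<phi> _ that] lt unfolding \<phi>_def by blast
  have dq: "deriv q z = \<phi> z * q z" if "z \<in> ball 0 1" for z
    using qnz[OF that] by (simp add: \<phi>_def)
  have "0 \<in> ball (0::complex) 1" by simp
  note Q = higher_derivs_from_log_deriv[OF holq hol\<phi> open_ball this dq, unfolded q0 mult_1_right]
  have F: "(deriv^^Suc n) f 0 = of_nat (Suc n) * (deriv^^n) q 0" for n
    unfolding fq by (rule higher_deriv_times_ident_at_0[OF holq open_ball]) simp
  show ?thesis
  proof (rule that[OF hol\<phi> le1])
    show "(deriv^^2) f 0 = 2 * \<phi> 0" using F[of 1] Q(1) by (simp add: numeral_2_eq_2)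
    show "(deriv^^3) f 0 = 3 * (deriv \<phi> 0 + \<phi> 0 ^ 2)"
      using F[of 2] Q(2) by (simp add: numeral_3_eq_3 numeral_2_eq_2)
    show "(deriv^^4) f 0 = 4 * ((deriv^^2) \<phi> 0 + 3 * \<phi> 0 * deriv \<phi> 0 + \<phi> 0 ^ 3)"
      using F[of 3] Q(3) by (simp add: eval_nat_numeral)
  qed
qed

lemma has_field_derivative_vanishing_on_open:
  fixes E D :: "complex \<Rightarrow> complex"
  assumes "open T" "\<forall>w\<in>T. E w = 0" "\<And>w. w \<in> T \<Longrightarrow> (E has_field_derivative D w) (at w)"
  shows "\<forall>w\<in>T. D w = 0"
proof
  fix w assume w: "w \<in> T"
  have "((\<lambda>_. 0) has_field_derivative D w) (at w)"
    using has_field_derivative_transform_within_open[OF assms(3)[OF w] assms(1) w] assms(2) by auto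
  then show "D w = 0" using DERIV_const DERIV_unique by blast
qed

lemma inverse_function_higher_deriv_identities:
  fixes f g :: "complex \<Rightarrow> complex"
  assumes holf: "f holomorphic_on S" "open S" and holg: "g holomorphic_on T" "open T"
    and gT: "g ` T \<subseteq> S" and fg: "\<forall>w\<in>T. f (g w) = w"
  defines "F k w \<equiv> (deriv^^k) f (g w)" and "G k w \<equiv> (deriv^^k) g w"
  shows "\<forall>w\<in>T. F 1 w * G 1 w = 1"
    "\<forall>w\<in>T. F 2 w * G 1 w ^ 2 + F 1 w * G 2 w = 0"
    "\<forall>w\<in>T. F 3 w * G 1 w ^ 3 + 3 * F 2 w * G 1 w * G 2 w + F 1 w * G 3 w = 0"
    "\<forall>w\<in>T. F 4 w * G 1 w ^ 4 + 6 * F 3 w * G 1 w ^ 2 * G 2 w + 3 * F 2 w * G 2 w ^ 2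
      + 4 * F 2 w * G 1 w * G 3 w + F 1 w * G 4 w = 0"
proof -
  note vanish = has_field_derivative_vanishing_on_open[OF holg(2)]
  have dF: "((\<lambda>w. F k w) has_field_derivative D) (at w)"
    if "w \<in> T" "D = F (Suc k) w * G 1 w" for k w D
  proof -
    have "((deriv^^k) f has_field_derivative (deriv^^Suc k) f (g w)) (at (g w))"
      using has_field_derivative_higher_deriv[OF holf] gT that(1) by blast
    moreover have "(g has_field_derivative deriv g w) (at w)"
      using holomorphic_derivI[OF holg] that(1) by blast
    ultimately show ?thesis
      using DERIV_chain[of "(deriv^^k) f" _ g w] that(2) by (simp add: F_def G_def o_def)
  qed
  have dG: "((\<lambda>w. G k w) has_field_derivative D) (at w)" if "w \<in> T" "D = G (Suc k) w" for k w D
    using has_field_derivative_higher_deriv[OF holg that(1), of k] that(2) by (simp add: G_def)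
  have "\<forall>w\<in>T. F 0 w - w = 0" by (simp add: F_def fg)
  then have E1: "\<forall>w\<in>T. F 1 w * G 1 w - 1 = 0"
    by (rule vanish) (auto intro!: derivative_eq_intros dF dG)
  then show "\<forall>w\<in>T. F 1 w * G 1 w = 1" by simp
  show E2: "\<forall>w\<in>T. F 2 w * G 1 w ^ 2 + F 1 w * G 2 w = 0"
    by (rule vanish[OF E1]) (auto intro!: derivative_eq_intros dF dG simp: numeral_2_eq_2 power2_eq_square)
  show E3: "\<forall>w\<in>T. F 3 w * G 1 w ^ 3 + 3 * F 2 w * G 1 w * G 2 w + F 1 w * G 3 w = 0"
    by (rule vanish[OF E2]) (auto intro!: derivative_eq_intros dF dG simp: eval_nat_numeral algebra_simps)
  show "\<forall>w\<in>T. F 4 w * G 1 w ^ 4 + 6 * F 3 w * G 1 w ^ 2 * G 2 w + 3 * F 2 w * G 2 w ^ 2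
      + 4 * F 2 w * G 1 w * G 3 w + F 1 w * G 4 w = 0"
    by (rule vanish[OF E3]) (auto intro!: derivative_eq_intros dF dG simp: eval_nat_numeral algebra_simps)
qed

lemma fact_2_3_4: "(fact 2 :: complex) = 2" "(fact 3 :: complex) = 6" "(fact 4 :: complex) = 24"
  by (simp_all add: fact_numeral)

lemma local_inverse_Hankel:
  fixes f g :: "complex \<Rightarrow> complex"
  assumes holf: "f holomorphic_on ball 0 1" and f1: "deriv f 0 = 1" and li: "local_inverse f g r"
  shows "tcoeff g 2 * tcoeff g 4 - (tcoeff g 3)^2 =
    tcoeff f 2 * tcoeff f 4 - (tcoeff f 2)^2 * tcoeff f 3 + (tcoeff f 2)^4 - (tcoeff f 3)^2"
proof -
  from li have r: "0 \<in> ball 0 r" and holg: "g holomorphic_on ball 0 r" and g0: "g 0 = 0"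
    and gim: "g ` ball 0 r \<subseteq> ball 0 1" and fg: "\<forall>w\<in>ball 0 r. f (g w) = w"
    unfolding local_inverse_def by auto
  define F2 F3 F4 where "F2 = (deriv^^2) f 0" and "F3 = (deriv^^3) f 0" and "F4 = (deriv^^4) f 0"
  define G2 G3 G4 where "G2 = (deriv^^2) g 0" and "G3 = (deriv^^3) g 0" and "G4 = (deriv^^4) g 0"
  note E = inverse_function_higher_deriv_identities[OF holf open_ball holg open_ball gim fg,
      rule_format, OF r, unfolded g0]
  have g1: "deriv g 0 = 1" using E(1) f1 by simp
  have g2: "G2 = - F2" using E(2) by (simp add: f1 g1 F2_def G2_def add_eq_0_iff)
  have g3: "G3 = - (F3 + 3 * F2 * G2)"
    using E(3) by (simp add: f1 g1 F2_def F3_def G2_def G3_def add_eq_0_iff)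
  have g4: "G4 = - (F4 + 6 * F3 * G2 + 3 * F2 * G2^2 + 4 * F2 * G3)"
    using E(4) by (simp add: f1 g1 F2_def F3_def F4_def G2_def G3_def G4_def add_eq_0_iff)
  have "tcoeff g 2 * tcoeff g 4 - (tcoeff g 3)^2 = G2 / 2 * (G4 / 24) - (G3 / 6)^2"
    by (simp add: tcoeff_def fact_2_3_4 G2_def G3_def G4_def)
  also have "\<dots> = F2 / 2 * (F4 / 24) - (F2 / 2)^2 * (F3 / 6) + (F2 / 2)^4 - (F3 / 6)^2"
    unfolding g4 g3 g2 by (simp add: field_simps power2_eq_square power4_eq_xxxx)
  also have "\<dots> = tcoeff f 2 * tcoeff f 4 - (tcoeff f 2)^2 * tcoeff f 3 + (tcoeff f 2)^4 - (tcoeff f 3)^2"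
    by (simp add: tcoeff_def fact_2_3_4 F2_def F3_def F4_def)
  finally show ?thesis .
qed

lemma Hankel_polynomial_bound:
  fixes c0 c1 c2 :: complex
  assumes h0: "cmod c0 \<le> 1" and h1: "cmod c1 \<le> 1 - (cmod c0)^2" and h2: "cmod c2 \<le> 1 - (cmod c0)^2"
  shows "cmod (c0 * c2 / 3 + 5/12 * c0^4 - c0^2 * c1 / 2 - c1^2 / 4) \<le> 5/12"
proof -
  define x where "x = cmod c0"
  have x0: "0 \<le> x" "x \<le> 1" using h0 by (auto simp: x_def)
  have "cmod (c0 * c2 / 3 + 5/12 * c0^4 - c0^2 * c1 / 2 - c1^2 / 4)
      \<le> cmod (c0 * c2 / 3) + cmod (5/12 * c0^4) + cmod (c0^2 * c1 / 2) + cmod (c1^2 / 4)"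
    by (smt (verit) norm_triangle_ineq4 norm_triangle_ineq)
  also have "\<dots> = x * cmod c2 / 3 + 5/12 * x^4 + x^2 * cmod c1 / 2 + (cmod c1)^2 / 4"
    by (simp add: x_def norm_mult norm_divide norm_power)
  also have "\<dots> \<le> x * (1 - x^2) / 3 + 5/12 * x^4 + x^2 * (1 - x^2) / 2 + (1 - x^2)^2 / 4"
    using h1 h2 x0 unfolding x_def[symmetric]
    by (intro add_mono divide_right_mono mult_left_mono power_mono order.refl) auto
  also have "\<dots> = 5/12 - (1 - x)^3 * (1 + x) / 6"
    by (simp add: field_simps power2_eq_square power3_eq_cube power4_eq_xxxx)
  also have "\<dots> \<le> 5/12" using x0 by simp
  finally show ?thesis .
qed

lemma Su_star_inverse_Hankel_bound:
  assumes su: "Su_star f" and li: "local_inverse f g r"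
  shows "cmod (tcoeff g 2 * tcoeff g 4 - (tcoeff g 3)\<^sup>2) \<le> 5 / 12"
proof -
  from su have holf: "f holomorphic_on ball 0 1" and f1: "deriv f 0 = 1" unfolding Su_star_def by auto
  obtain \<phi> where hol\<phi>: "\<phi> holomorphic_on ball 0 1" and le: "\<And>z. z \<in> ball 0 1 \<Longrightarrow> cmod (\<phi> z) \<le> 1"
    and F2: "(deriv^^2) f 0 = 2 * \<phi> 0"
    and F3: "(deriv^^3) f 0 = 3 * (deriv \<phi> 0 + \<phi> 0 ^ 2)"
    and F4: "(deriv^^4) f 0 = 4 * ((deriv^^2) \<phi> 0 + 3 * \<phi> 0 * deriv \<phi> 0 + \<phi> 0 ^ 3)"
    using Su_star_higher_derivs[OF su] by blast
  define c0 c1 c2 where "c0 = \<phi> 0" and "c1 = deriv \<phi> 0" and "c2 = (deriv^^2) \<phi> 0 / 2"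
  have "cmod c0 \<le> 1" using le[of 0] by (simp add: c0_def)
  moreover have "cmod c1 \<le> 1 - (cmod c0)^2"
    using disc_self_map_deriv_bound[OF hol\<phi> le] by (simp add: c0_def c1_def)
  moreover have "cmod c2 \<le> 1 - (cmod c0)^2"
    using disc_self_map_second_deriv_bound[OF hol\<phi> le] by (simp add: c0_def c2_def norm_divide)
  moreover have "tcoeff g 2 * tcoeff g 4 - (tcoeff g 3)\<^sup>2 = c0 * c2 / 3 + 5/12 * c0^4 - c0^2 * c1 / 2 - c1^2 / 4"
    unfolding local_inverse_Hankel[OF holf f1 li]
    by (simp add: tcoeff_def fact_2_3_4 F2 F3 F4 c0_def c1_def c2_def
        field_simps power2_eq_square power3_eq_cube power4_eq_xxxx)
  ultimately show ?thesis using Hankel_polynomial_bound by simp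
qed

lemma local_inverse_exists:
  assumes holf: "f holomorphic_on ball 0 1" and f0: "f 0 = 0" and df0: "deriv f 0 \<noteq> 0"
  shows "\<exists>g r. local_inverse f g r"
proof -
  obtain \<rho> where \<rho>: "\<rho> > 0" "ball (0::complex) \<rho> \<subseteq> ball 0 1" "open (f ` ball 0 \<rho>)" "inj_on f (ball 0 \<rho>)"
    by (rule has_complex_derivative_locally_invertible[OF holf _ open_ball df0]) auto
  obtain g where holg: "g holomorphic_on (f ` ball 0 \<rho>)" and gf: "\<And>z. z \<in> ball 0 \<rho> \<Longrightarrow> g (f z) = z"
    using holomorphic_has_inverse[OF holomorphic_on_subset[OF holf \<rho>(2)] open_ball \<rho>(4)] by metis
  have "0 \<in> f ` ball 0 \<rho>" using \<rho>(1) f0 by (metis centre_in_ball imageI)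
  then obtain r where r: "r > 0" "ball 0 r \<subseteq> f ` ball 0 \<rho>"
    using \<rho>(3) open_contains_ball by blast
  have "local_inverse f g r"
    unfolding local_inverse_def
  proof (intro conjI ballI)
    show "g holomorphic_on ball 0 r" using holg r(2) holomorphic_on_subset by blast
    show "g 0 = 0" using gf[of 0] \<rho>(1) f0 by simp
    show "g ` ball 0 r \<subseteq> ball 0 1"
    proof
      fix y assume "y \<in> g ` ball 0 r"
      then obtain z where "z \<in> ball 0 \<rho>" "y = g (f z)" using r(2) by blast
      then show "y \<in> ball 0 1" using gf \<rho>(2) by auto
    qed
    show "f (g w) = w" if "w \<in> ball 0 r" for w using r(2) gf that by auto
  qed (use r in auto)
  then show ?thesis by blast
qed

lemma higher_deriv_times_exp:
  "(deriv^^n) (\<lambda>z. z * exp z) = (\<lambda>z::complex. (z + of_nat n) * exp z)"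
proof (induction n)
  case (Suc n)
  have "((\<lambda>z::complex. (z + of_nat n) * exp z) has_field_derivative (z + of_nat (Suc n)) * exp z) (at z)"
    for z by (auto intro!: derivative_eq_intros simp: algebra_simps)
  then show ?case using Suc by (auto intro!: DERIV_imp_deriv)
qed simp

lemma Su_star_inverse_Hankel_sharp:
  "\<exists>f g r. Su_star f \<and> local_inverse f g r \<and>
            cmod (tcoeff g 2 * tcoeff g 4 - (tcoeff g 3)\<^sup>2) = 5 / 12"
proof -
  define f where "f = (\<lambda>z::complex. z * exp z)"
  have holf: "f holomorphic_on ball 0 1" unfolding f_def by (intro holomorphic_intros)
  have hd: "(deriv^^n) f z = (z + of_nat n) * exp z" for n z unfolding f_def higher_deriv_times_exp by simp
  have d1: "deriv f z = (z + 1) * exp z" for z using hd[of 1 z] by simp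
  have su: "Su_star f"
    unfolding Su_star_def
  proof (intro conjI ballI impI holf)
    fix z :: complex assume z: "z \<in> ball 0 1" "z \<noteq> 0"
    have "z * deriv f z / f z - 1 = z" using z(2) by (simp only: d1) (simp add: f_def field_simps)
    then show "cmod (z * deriv f z / f z - 1) < 1" using z(1) by simp
  qed (simp_all only: d1, simp_all add: f_def)
  obtain g r where li: "local_inverse f g r"
    using local_inverse_exists[OF holf] d1[of 0] by (auto simp: f_def)
  have "tcoeff g 2 * tcoeff g 4 - (tcoeff g 3)\<^sup>2 = 5/12"
    unfolding local_inverse_Hankel[OF holf d1[of 0, simplified] li]
    by (simp add: tcoeff_def hd fact_2_3_4 power2_eq_square)
  then show ?thesis using su li by (metis norm_divide norm_numeral)
qed

theorem mainTheorem4: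
  shows "(\<forall>f g r. Su_star f \<and> local_inverse f g r \<longrightarrow>
            cmod (tcoeff g 2 * tcoeff g 4 - (tcoeff g 3)\<^sup>2) \<le> 5 / 12)
       \<and> (\<exists>f g r. Su_star f \<and> local_inverse f g r \<and>
            cmod (tcoeff g 2 * tcoeff g 4 - (tcoeff g 3)\<^sup>2) = 5 / 12)"
  using Su_star_inverse_Hankel_bound Su_star_inverse_Hankel_sharp by blast

end
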